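(* Let $\Gamma=(V,E)$ be a simple graph of order $n$ and size $m$, and let $\lambda$ be the spectral radius of $\Gamma$. Then the global dual alliance number of $\Gamma$ satisfies $$\gamma_{a_d}(\Gamma)\ge \left\lceil\frac{2m+n}{4(\lambda+1)}\right\rceil$$ and the global strong dual alliance number of $\Gamma$ satisfies $$\gamma_{\hat{a}_d}(\Gamma)\ge \left\lceil\frac{m+n}{2\lambda+1}\right\rceil.$$
   Context: For $S\subseteq V$ and $v\in V$, $N_S(v)=\{u\in S: u\sim v\}$ and $N_{V\setminus S}(v)=\{u\in V\setminus S: u\sim v\}$. A nonempty set $S\subseteq V$ is a global dual alliance if (i) $|N_S(v)|+1\ge |N_{V\setminus S}(v)|$ for every $v\in S$ and (ii) $|N_S(v)|\ge |N_{V\setminus S}(v)|+1$ for every $v\in V\setminus S$. It is a global strong dual alliance if (i') $|N_S(v)|\ge |N_{V\setminus S}(v)|$ for every $v\in S$ and (ii') $|N_S(v)|\ge |N_{V\setminus S}(v)|+2$ for every $v\in V\setminus S$. $\gamma_{a_d}(\Gamma)$ (resp. $\gamma_{\hat a_d}(\Gamma)$) is the minimum cardinality of a global dual (resp. global strong dual) alliance. The spectral radius is the largest eigenvalue of the adjacency matrix of $\Gamma$. *)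

theory Defs
  imports Complex_Main "Jordan_Normal_Form.Char_Poly"
begin

text \<open>A simple graph of order n: vertex set {0..<n}, adjacency relation adj that is
 symmetric and irreflexive (only its values on vertex pairs matter).\<close>

definition simple_graph :: "nat \<Rightarrow> (nat \<Rightarrow> nat \<Rightarrow> bool) \<Rightarrow> bool" where
  "simple_graph n adj \<longleftrightarrow> (\<forall>u<n. \<forall>v<n. adj u v = adj v u) \<and> (\<forall>v<n. \<not> adj v v)"

definition graph_size :: "nat \<Rightarrow> (nat \<Rightarrow> nat \<Rightarrow> bool) \<Rightarrow> nat" where
  "graph_size n adj = card {{u, v} | u v. u < n \<and> v < n \<and> adj u v}"

definition adj_matrix :: "nat \<Rightarrow> (nat \<Rightarrow> nat \<Rightarrow> bool) \<Rightarrow> real mat" where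
  "adj_matrix n adj = mat n n (\<lambda>(i, j). if adj i j then 1 else 0)"

definition graph_spectral_radius :: "nat \<Rightarrow> (nat \<Rightarrow> nat \<Rightarrow> bool) \<Rightarrow> real" where
  "graph_spectral_radius n adj = Max {k. eigenvalue (adj_matrix n adj) k}"

definition nbhd :: "(nat \<Rightarrow> nat \<Rightarrow> bool) \<Rightarrow> nat set \<Rightarrow> nat \<Rightarrow> nat set" where
  "nbhd adj S v = {u \<in> S. adj u v}"

definition global_dual_alliance :: "nat \<Rightarrow> (nat \<Rightarrow> nat \<Rightarrow> bool) \<Rightarrow> nat set \<Rightarrow> bool" where
  "global_dual_alliance n adj S \<longleftrightarrow> S \<noteq> {} \<and> S \<subseteq> {0..<n} \<and>
     (\<forall>v\<in>S. card (nbhd adj S v) + 1 \<ge> card (nbhd adj ({0..<n} - S) v)) \<and>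
     (\<forall>v\<in>{0..<n} - S. card (nbhd adj S v) \<ge> card (nbhd adj ({0..<n} - S) v) + 1)"

definition global_strong_dual_alliance :: "nat \<Rightarrow> (nat \<Rightarrow> nat \<Rightarrow> bool) \<Rightarrow> nat set \<Rightarrow> bool" where
  "global_strong_dual_alliance n adj S \<longleftrightarrow> S \<noteq> {} \<and> S \<subseteq> {0..<n} \<and>
     (\<forall>v\<in>S. card (nbhd adj S v) \<ge> card (nbhd adj ({0..<n} - S) v)) \<and>
     (\<forall>v\<in>{0..<n} - S. card (nbhd adj S v) \<ge> card (nbhd adj ({0..<n} - S) v) + 2)"

definition gdual_alliance_number :: "nat \<Rightarrow> (nat \<Rightarrow> nat \<Rightarrow> bool) \<Rightarrow> nat" where
  "gdual_alliance_number n adj = Min (card ` {S. global_dual_alliance n adj S})"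

definition gstrong_dual_alliance_number :: "nat \<Rightarrow> (nat \<Rightarrow> nat \<Rightarrow> bool) \<Rightarrow> nat" where
  "gstrong_dual_alliance_number n adj = Min (card ` {S. global_strong_dual_alliance n adj S})"

end

theory Submission
  imports Defs "HOL-Analysis.Function_Topology" "Jordan_Normal_Form.Spectral_Radius"
begin

text \<open>Let S be an alliance, T its complement, and e(X, Y) the number of ordered pairs (v, u) of
adjacent vertices with v in X and u in Y. Then 2m = e(S,S) + 2 e(S,T) + e(T,T). Summing the
alliance condition with slack a over S gives e(S,T) \<le> e(S,S) + a|S|, summing the condition with
slack b over T gives e(T,T) + b|T| \<le> e(S,T), and the Rayleigh quotient of the indicator vector
of S gives e(S,S) \<le> \<lambda>|S|. Together, 2m + bn \<le> (4\<lambda> + 3a + b)|S|; the dual and strong dual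
alliances are the cases (a, b) = (1, 1) and (0, 2).\<close>

definition quad_form :: "nat \<Rightarrow> (nat \<Rightarrow> nat \<Rightarrow> real) \<Rightarrow> (nat \<Rightarrow> real) \<Rightarrow> real" where
  "quad_form n a x = (\<Sum>i<n. \<Sum>j<n. a i j * x i * x j)"

definition sq_norm :: "nat \<Rightarrow> (nat \<Rightarrow> real) \<Rightarrow> real" where
  "sq_norm n x = (\<Sum>i<n. (x i)\<^sup>2)"

lemma sq_norm_nonneg: "0 \<le> sq_norm n x"
  unfolding sq_norm_def by (simp add: sum_nonneg)

lemma sq_norm_eq_0_iff: "sq_norm n x = 0 \<longleftrightarrow> (\<forall>i<n. x i = 0)"
  unfolding sq_norm_def by (auto simp: sum_nonneg_eq_0_iff)

lemma quad_form_cong: "(\<And>i. i < n \<Longrightarrow> x i = y i) \<Longrightarrow> quad_form n a x = quad_form n a y"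
  unfolding quad_form_def by (intro sum.cong) auto

lemma sq_norm_cong: "(\<And>i. i < n \<Longrightarrow> x i = y i) \<Longrightarrow> sq_norm n x = sq_norm n y"
  unfolding sq_norm_def by (intro sum.cong) auto

lemma quad_form_scale: "quad_form n a (\<lambda>i. c * x i) = c\<^sup>2 * quad_form n a x"
  unfolding quad_form_def by (simp add: sum_distrib_left power2_eq_square algebra_simps)

lemma sq_norm_scale: "sq_norm n (\<lambda>i. c * x i) = c\<^sup>2 * sq_norm n x"
  unfolding sq_norm_def by (simp add: sum_distrib_left power2_eq_square algebra_simps)

lemma quad_form_add_scaled:
  assumes sym: "\<And>i j. i < n \<Longrightarrow> j < n \<Longrightarrow> a i j = a j i"
  shows "quad_form n a (\<lambda>i. x i + t * w i)
    = quad_form n a x + 2 * t * (\<Sum>i<n. w i * (\<Sum>j<n. a i j * x j)) + t\<^sup>2 * quad_form n a w"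
proof -
  have expand: "quad_form n a (\<lambda>i. x i + t * w i) = quad_form n a x
      + t * (\<Sum>i<n. \<Sum>j<n. a i j * x i * w j) + t * (\<Sum>i<n. \<Sum>j<n. a i j * w i * x j)
      + t\<^sup>2 * quad_form n a w"
    unfolding quad_form_def by (simp add: sum.distrib sum_distrib_left power2_eq_square algebra_simps)
  have swap: "(\<Sum>i<n. \<Sum>j<n. a i j * x i * w j) = (\<Sum>i<n. \<Sum>j<n. a i j * w i * x j)"
  proof -
    have "(\<Sum>i<n. \<Sum>j<n. a i j * x i * w j) = (\<Sum>j<n. \<Sum>i<n. a i j * x i * w j)"
      by (rule sum.swap)
    also have "\<dots> = (\<Sum>j<n. \<Sum>i<n. a j i * w j * x i)"
      using sym by (intro sum.cong refl) (simp add: ac_simps)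
    finally show ?thesis .
  qed
  have cross: "(\<Sum>i<n. \<Sum>j<n. a i j * w i * x j) = (\<Sum>i<n. w i * (\<Sum>j<n. a i j * x j))"
    by (simp add: sum_distrib_left ac_simps)
  show ?thesis
    unfolding expand swap cross by (simp only: mult_2 distrib_right add.assoc)
qed

lemma sum_delta_mult:
  fixes c :: "'a::semiring_0" and n :: nat
  assumes "i < n"
  shows "(\<Sum>j<n. (if i = j then c else 0) * f j) = c * f i"
proof -
  have "(\<Sum>j<n. (if i = j then c else 0) * f j) = (\<Sum>j<n. if i = j then c * f i else 0)"
    by (intro sum.cong) auto
  then show ?thesis using assms by (simp add: sum.delta)
qed

lemma quad_form_diag_shift:
  "quad_form n (\<lambda>i j. a i j - (if i = j then c else 0)) x = quad_form n a x - c * sq_norm n x"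
proof -
  have "(\<Sum>j<n. (a i j - (if i = j then c else 0)) * x i * x j)
      = (\<Sum>j<n. a i j * x i * x j) - c * (x i)\<^sup>2" if "i < n" for i
  proof -
    have "(\<Sum>j<n. (a i j - (if i = j then c else 0)) * x i * x j)
        = (\<Sum>j<n. a i j * x i * x j) - (\<Sum>j<n. (if i = j then c else 0) * (x i * x j))"
      by (simp only: left_diff_distrib sum_subtractf mult.assoc)
    also have "\<dots> = (\<Sum>j<n. a i j * x i * x j) - c * (x i * x i)"
      using that by (simp only: sum_delta_mult)
    finally show ?thesis by (simp only: power2_eq_square)
  qed
  then show ?thesis
    unfolding quad_form_def sq_norm_def by (simp add: sum_subtractf sum_distrib_left)
qed

lemma negative_semidef_zero_in_kernel:
  assumes sym: "\<And>i j. i < n \<Longrightarrow> j < n \<Longrightarrow> b i j = b j i"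
    and nonpos: "\<And>y. quad_form n b y \<le> 0" and zero: "quad_form n b x = 0" and "i < n"
  shows "(\<Sum>j<n. b i j * x j) = 0"
proof -
  txt \<open>Along the line x + t w with w = B x the form equals 2 t |w|^2 + t^2 D, which is
    positive for small t > 0 unless w = 0.\<close>
  define w where "w i = (\<Sum>j<n. b i j * x j)" for i
  define N where "N = sq_norm n w"
  define D where "D = quad_form n b w"
  have "(\<Sum>i<n. w i * (\<Sum>j<n. b i j * x j)) = N"
    unfolding N_def sq_norm_def by (simp add: w_def power2_eq_square)
  moreover have "quad_form n b (\<lambda>i. x i + t * w i)
      = quad_form n b x + 2 * t * (\<Sum>i<n. w i * (\<Sum>j<n. b i j * x j)) + t\<^sup>2 * quad_form n b w" for t
    by (rule quad_form_add_scaled[OF sym])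
  ultimately have along_w: "2 * t * N + t\<^sup>2 * D \<le> 0" for t
    using nonpos[of "\<lambda>i. x i + t * w i"] zero unfolding D_def by simp
  have "N = 0"
  proof (rule ccontr)
    assume "N \<noteq> 0"
    then have "N > 0" using sq_norm_nonneg[of n w] unfolding N_def by linarith
    define t where "t = N / (\<bar>D\<bar> + 1)"
    have "t > 0" using \<open>N > 0\<close> unfolding t_def by simp
    have "t * (2 * N + t * D) \<le> 0"
      using along_w[of t] by (simp add: power2_eq_square algebra_simps)
    then have "2 * N + t * D \<le> 0" using \<open>t > 0\<close> by (simp add: mult_le_0_iff)
    moreover have "t * (- (\<bar>D\<bar> + 1)) \<le> t * D"
      using \<open>t > 0\<close> by (intro mult_left_mono) auto
    moreover have "t * (\<bar>D\<bar> + 1) = N"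
      unfolding t_def by simp
    ultimately show False using \<open>N > 0\<close> by linarith
  qed
  then show ?thesis
    using \<open>i < n\<close> unfolding N_def sq_norm_eq_0_iff w_def by blast
qed

lemma continuous_on_quad_form: "continuous_on UNIV (quad_form n a)"
  unfolding quad_form_def by (intro continuous_on_sum continuous_on_mult continuous_on_const) simp_all

lemma continuous_on_sq_norm: "continuous_on UNIV (sq_norm n)"
  unfolding sq_norm_def by (intro continuous_on_sum continuous_on_power) simp

text \<open>Vectors of R^n are functions \<open>nat \<Rightarrow> real\<close> of which only the first n values matter;
pinning the others to 0 makes the unit sphere compact in the product topology.\<close>

lemma compact_unit_sphere: "compact {x. (\<forall>i\<ge>n. x i = 0) \<and> sq_norm n x = 1}"
proof -
  define box where "box = PiE UNIV (\<lambda>i. if i < n then {-1..1} else {0::real})"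
  have "compactin (product_topology (\<lambda>_. euclidean) UNIV) box"
    unfolding box_def by (simp add: compactin_PiE)
  then have "compact box"
    by (simp add: euclidean_product_topology)
  moreover have "closed {x. sq_norm n x = 1}"
    using continuous_closed_preimage_constant[OF continuous_on_sq_norm closed_UNIV] by simp
  moreover have "{x. (\<forall>i\<ge>n. x i = 0) \<and> sq_norm n x = 1} = box \<inter> {x. sq_norm n x = 1}"
  proof -
    have "\<bar>x i\<bar> \<le> 1" if "sq_norm n x = 1" "i < n" for x i
    proof -
      have "(x i)\<^sup>2 \<le> sq_norm n x"
        unfolding sq_norm_def using \<open>i < n\<close> by (intro member_le_sum) auto
      then show ?thesis using that abs_square_le_1 by auto
    qed
    then show ?thesis unfolding box_def by (fastforce simp: abs_le_iff not_less)
  qed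
  ultimately show ?thesis by (simp add: compact_Int_closed)
qed

lemma quad_form_attains_max:
  assumes "0 < n"
  obtains x where "sq_norm n x = 1" and "\<And>y. quad_form n a y \<le> quad_form n a x * sq_norm n y"
proof -
  define S where "S = {x. (\<forall>i\<ge>n. x i = 0) \<and> sq_norm n x = 1}"
  have "(\<Sum>i<n. (if i = 0 then 1 else 0 :: real)\<^sup>2) = (\<Sum>i<n. if i = 0 then 1 else 0)"
    by (intro sum.cong) auto
  then have "(\<lambda>i. if i = 0 then 1 else 0) \<in> S"
    using assms unfolding S_def sq_norm_def by simp
  then obtain x where "x \<in> S" and max: "\<And>y. y \<in> S \<Longrightarrow> quad_form n a y \<le> quad_form n a x"
    using continuous_attains_sup[OF compact_unit_sphere[of n, folded S_def] _
        continuous_on_subset[OF continuous_on_quad_form]] by blast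
  have "quad_form n a y \<le> quad_form n a x * sq_norm n y" for y
  proof (cases "sq_norm n y = 0")
    case True
    then have "quad_form n a y = quad_form n a (\<lambda>_. 0)"
      by (intro quad_form_cong) (simp add: sq_norm_eq_0_iff)
    then show ?thesis using True by (simp add: quad_form_def)
  next
    case False
    then have pos: "0 < sq_norm n y" using sq_norm_nonneg[of n y] by linarith
    define s where "s = sqrt (sq_norm n y)"
    have s2: "s\<^sup>2 = sq_norm n y" using pos unfolding s_def by simp
    define z where "z i = (if i < n then y i / s else 0)" for i
    have z: "\<And>i. i < n \<Longrightarrow> z i = (1 / s) * y i" unfolding z_def by simp
    have "sq_norm n z = sq_norm n (\<lambda>i. (1 / s) * y i)" by (rule sq_norm_cong) (rule z)
    also have "\<dots> = (1 / s)\<^sup>2 * sq_norm n y" by (rule sq_norm_scale)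
    also have "\<dots> = 1" using pos s2 by (simp add: power_divide)
    finally have "z \<in> S" unfolding S_def z_def by simp
    have "quad_form n a z = quad_form n a (\<lambda>i. (1 / s) * y i)" by (rule quad_form_cong) (rule z)
    also have "\<dots> = quad_form n a y / s\<^sup>2" unfolding quad_form_scale by (simp add: power_divide)
    finally have "quad_form n a y / s\<^sup>2 \<le> quad_form n a x" using max[OF \<open>z \<in> S\<close>] by simp
    then show ?thesis using pos s2 by (simp add: divide_le_eq)
  qed
  with \<open>x \<in> S\<close> show thesis using that unfolding S_def by blast
qed

lemma symmetric_quad_form_max_eigenvector:
  assumes sym: "\<And>i j. i < n \<Longrightarrow> j < n \<Longrightarrow> a i j = a j i" and "0 < n"
  obtains x M where "sq_norm n x = 1" and "\<And>i. i < n \<Longrightarrow> (\<Sum>j<n. a i j * x j) = M * x i"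
    and "\<And>y. quad_form n a y \<le> M * sq_norm n y"
proof -
  obtain x where x: "sq_norm n x = 1" and max: "\<And>y. quad_form n a y \<le> quad_form n a x * sq_norm n y"
    using quad_form_attains_max[OF \<open>0 < n\<close>] by blast
  define M where "M = quad_form n a x"
  txt \<open>The maximiser x of the Rayleigh quotient is a zero of the negative semidefinite form
    of A - M I, hence an eigenvector.\<close>
  define b where "b i j = a i j - (if i = j then M else 0)" for i j
  have "(\<Sum>j<n. b i j * x j) = 0" if "i < n" for i
  proof (rule negative_semidef_zero_in_kernel[OF _ _ _ that])
    show "b i j = b j i" if "i < n" "j < n" for i j
      using sym[OF that] unfolding b_def by simp
    show "quad_form n b y \<le> 0" for y
      using max[of y] unfolding b_def quad_form_diag_shift M_def by simp
    show "quad_form n b x = 0"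
      unfolding b_def quad_form_diag_shift M_def x by simp
  qed
  then have eigen: "(\<Sum>j<n. a i j * x j) = M * x i" if "i < n" for i
    using that unfolding b_def by (simp add: left_diff_distrib sum_subtractf sum_delta_mult)
  show thesis using x eigen max[unfolded M_def[symmetric]] by (rule that)
qed

lemma quad_form_le_Max_spectrum:
  fixes A :: "real mat"
  assumes A: "A \<in> carrier_mat n n" and sym: "transpose_mat A = A" and "0 < n"
  shows "quad_form n (\<lambda>i j. A $$ (i, j)) x \<le> Max (spectrum A) * sq_norm n x"
proof -
  have entries_sym: "A $$ (i, j) = A $$ (j, i)" if "i < n" "j < n" for i j
  proof -
    have "transpose_mat A $$ (i, j) = A $$ (j, i)" using A that by simp
    then show ?thesis using sym by simp
  qed
  obtain v M where v: "sq_norm n v = 1"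
    and ev: "\<And>i. i < n \<Longrightarrow> (\<Sum>j<n. A $$ (i, j) * v j) = M * v i"
    and bound: "\<And>y. quad_form n (\<lambda>i j. A $$ (i, j)) y \<le> M * sq_norm n y"
    using symmetric_quad_form_max_eigenvector[where a="\<lambda>i j. A $$ (i, j)", OF entries_sym \<open>0 < n\<close>]
    by blast
  have "eigenvector A (Matrix.vec n v) M"
    unfolding eigenvector_def
  proof (intro conjI)
    show "Matrix.vec n v \<in> carrier_vec (dim_row A)" using A by simp
    show "Matrix.vec n v \<noteq> 0\<^sub>v (dim_row A)"
    proof
      assume zero: "Matrix.vec n v = 0\<^sub>v (dim_row A)"
      have "v i = 0" if "i < n" for i
        using arg_cong[OF zero, of "\<lambda>u. u $ i"] A that by simp
      then have "sq_norm n v = 0" by (simp add: sq_norm_eq_0_iff)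
      with v show False by simp
    qed
    show "A *\<^sub>v Matrix.vec n v = M \<cdot>\<^sub>v Matrix.vec n v"
      by (rule eq_vecI) (use A ev in \<open>auto simp: mult_mat_vec_def scalar_prod_def atLeast0LessThan\<close>)
  qed
  then have "M \<in> spectrum A" unfolding spectrum_def eigenvalue_def by blast
  then have "M \<le> Max (spectrum A)" using card_finite_spectrum(1)[OF A] by simp
  then show ?thesis using bound[of x] sq_norm_nonneg[of n x] by (meson mult_right_mono order_trans)
qed

lemma adj_matrix_carrier: "adj_matrix n adj \<in> carrier_mat n n"
  unfolding adj_matrix_def by simp

lemma adj_matrix_symmetric:
  "simple_graph n adj \<Longrightarrow> transpose_mat (adj_matrix n adj) = adj_matrix n adj"
  unfolding adj_matrix_def simple_graph_def by (intro eq_matI) auto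

definition degree_sum :: "(nat \<Rightarrow> nat \<Rightarrow> bool) \<Rightarrow> nat set \<Rightarrow> nat set \<Rightarrow> real" where
  "degree_sum adj X Y = (\<Sum>v\<in>X. real (card (nbhd adj Y v)))"

lemma card_nbhd_eq_sum: "finite Y \<Longrightarrow> real (card (nbhd adj Y v)) = (\<Sum>u\<in>Y. of_bool (adj u v))"
  unfolding nbhd_def by (simp add: Int_def)

lemma degree_sum_eq_sum_sum:
  "finite Y \<Longrightarrow> degree_sum adj X Y = (\<Sum>v\<in>X. \<Sum>u\<in>Y. of_bool (adj u v))"
  unfolding degree_sum_def by (simp only: card_nbhd_eq_sum)

lemma degree_sum_commute:
  assumes "simple_graph n adj" and "X \<subseteq> {0..<n}" and "Y \<subseteq> {0..<n}"
  shows "degree_sum adj X Y = degree_sum adj Y X"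
proof -
  have "finite X" "finite Y" using assms(2,3) finite_subset by auto
  have "adj u v = adj v u" if "u \<in> Y" "v \<in> X" for u v
  proof -
    have "u < n" "v < n" using assms(2,3) that by auto
    then show ?thesis using assms(1) unfolding simple_graph_def by blast
  qed
  then have "(\<Sum>v\<in>X. \<Sum>u\<in>Y. of_bool (adj u v)) = (\<Sum>u\<in>Y. \<Sum>v\<in>X. of_bool (adj v u) :: real)"
    by (subst sum.swap) (auto intro!: sum.cong)
  then show ?thesis using \<open>finite X\<close> \<open>finite Y\<close> by (simp add: degree_sum_eq_sum_sum)
qed

lemma degree_sum_Un_left:
  "finite X1 \<Longrightarrow> finite X2 \<Longrightarrow> X1 \<inter> X2 = {} \<Longrightarrow>
    degree_sum adj (X1 \<union> X2) Y = degree_sum adj X1 Y + degree_sum adj X2 Y"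
  unfolding degree_sum_def by (rule sum.union_disjoint)

lemma degree_sum_Un_right:
  assumes "finite Y1" and "finite Y2" and "Y1 \<inter> Y2 = {}"
  shows "degree_sum adj X (Y1 \<union> Y2) = degree_sum adj X Y1 + degree_sum adj X Y2"
proof -
  have "card (nbhd adj (Y1 \<union> Y2) v) = card (nbhd adj Y1 v) + card (nbhd adj Y2 v)" for v
  proof -
    have "nbhd adj (Y1 \<union> Y2) v = nbhd adj Y1 v \<union> nbhd adj Y2 v" by (auto simp: nbhd_def)
    moreover have "nbhd adj Y1 v \<inter> nbhd adj Y2 v = {}" using assms(3) by (auto simp: nbhd_def)
    ultimately show ?thesis using assms(1,2) by (simp add: card_Un_disjoint nbhd_def)
  qed
  then show ?thesis unfolding degree_sum_def by (simp add: sum.distrib)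
qed

lemma degree_sum_vertex_set:
  assumes g: "simple_graph n adj"
  shows "degree_sum adj {0..<n} {0..<n} = 2 * real (graph_size n adj)"
proof -
  define V where "V = {0..<n}"
  define E where "E = {{u, v} | u v. u < n \<and> v < n \<and> adj u v}"
  have "finite E" unfolding E_def by (rule finite_subset[of _ "Pow V"]) (auto simp: V_def)
  have deg: "card {e \<in> E. v \<in> e} = card (nbhd adj V v)" if "v \<in> V" for v
  proof -
    have "{e \<in> E. v \<in> e} = (\<lambda>u. {u, v}) ` nbhd adj V v"
      using g that unfolding E_def V_def nbhd_def simple_graph_def by (auto simp: doubleton_eq_iff)
    moreover have "inj_on (\<lambda>u. {u, v}) (nbhd adj V v)"
      using g that unfolding inj_on_def nbhd_def V_def simple_graph_def by (auto simp: doubleton_eq_iff)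
    ultimately show ?thesis by (simp add: card_image)
  qed
  have ends: "card {v \<in> V. v \<in> e} = 2" if "e \<in> E" for e
  proof -
    obtain u v where "e = {u, v}" "u < n" "v < n" "adj u v" using \<open>e \<in> E\<close> unfolding E_def by blast
    moreover have "u \<noteq> v" using g \<open>adj u v\<close> \<open>v < n\<close> unfolding simple_graph_def by auto
    ultimately have "{v \<in> V. v \<in> e} = {u, v}" unfolding V_def by auto
    then show ?thesis using \<open>u \<noteq> v\<close> by simp
  qed
  have "(\<Sum>v\<in>V. card (nbhd adj V v)) = (\<Sum>v\<in>V. card {e \<in> E. v \<in> e})"
    by (intro sum.cong refl) (simp add: deg)
  also have "\<dots> = 2 * card E"
    using ends \<open>finite E\<close> by (intro sum_multicount) (auto simp: V_def)
  finally have "real (\<Sum>v\<in>V. card (nbhd adj V v)) = real (2 * card E)" by simp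
  then show ?thesis
    unfolding degree_sum_def graph_size_def E_def[symmetric] V_def[symmetric] by simp
qed

lemma degree_sum_le_spectral_radius:
  assumes g: "simple_graph n adj" and "0 < n" and S: "S \<subseteq> {0..<n}"
  shows "degree_sum adj S S \<le> graph_spectral_radius n adj * real (card S)"
proof -
  define A where "A = adj_matrix n adj"
  define x where "x i = (of_bool (i \<in> S) :: real)" for i
  have "finite S" using S finite_subset by auto
  have restrict: "(\<Sum>i<n. of_bool (i \<in> S) * f i) = (\<Sum>i\<in>S. f i)" for f :: "nat \<Rightarrow> real"
  proof -
    have "{..<n} \<inter> {i. i \<in> S} = S" using S by auto
    then show ?thesis by simp
  qed
  have row: "(\<Sum>j<n. A $$ (i, j) * x i * x j) = x i * real (card (nbhd adj S i))" if "i < n" for i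
  proof -
    have "(\<Sum>j<n. A $$ (i, j) * x i * x j) = (\<Sum>j<n. x i * (of_bool (j \<in> S) * of_bool (adj j i)))"
      by (intro sum.cong refl) (use g that in \<open>auto simp: A_def adj_matrix_def x_def simple_graph_def\<close>)
    also have "\<dots> = x i * (\<Sum>j\<in>S. of_bool (adj j i))"
      by (simp only: sum_distrib_left[symmetric] restrict)
    also have "\<dots> = x i * real (card (nbhd adj S i))"
      using \<open>finite S\<close> by (simp only: card_nbhd_eq_sum)
    finally show ?thesis .
  qed
  have "quad_form n (\<lambda>i j. A $$ (i, j)) x = (\<Sum>i<n. x i * real (card (nbhd adj S i)))"
    unfolding quad_form_def by (intro sum.cong refl) (simp add: row)
  also have "\<dots> = degree_sum adj S S"
    unfolding x_def degree_sum_def by (simp only: restrict)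
  finally have quad: "quad_form n (\<lambda>i j. A $$ (i, j)) x = degree_sum adj S S" .
  have "sq_norm n x = (\<Sum>i<n. of_bool (i \<in> S) * 1)"
    unfolding sq_norm_def x_def by (intro sum.cong) auto
  then have norm: "sq_norm n x = real (card S)" by (simp only: restrict) simp
  show ?thesis
    using quad_form_le_Max_spectrum[OF adj_matrix_carrier adj_matrix_symmetric[OF g] \<open>0 < n\<close>, of x]
    unfolding graph_spectral_radius_def spectrum_def quad norm A_def[symmetric] .
qed

lemma alliance_size_bound:
  fixes a b :: nat
  assumes g: "simple_graph n adj" and "0 < n" and S: "S \<subseteq> {0..<n}"
    and inside: "\<And>v. v \<in> S \<Longrightarrow> card (nbhd adj ({0..<n} - S) v) \<le> card (nbhd adj S v) + a"
    and outside: "\<And>v. v \<in> {0..<n} - S \<Longrightarrow> card (nbhd adj ({0..<n} - S) v) + b \<le> card (nbhd adj S v)"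
  shows "2 * real (graph_size n adj) + real b * real n
    \<le> (4 * graph_spectral_radius n adj + 3 * real a + real b) * real (card S)"
proof -
  define T where "T = {0..<n} - S"
  have "finite S" "finite T" "S \<inter> T = {}" "S \<union> T = {0..<n}" and T: "T \<subseteq> {0..<n}"
    using S finite_subset unfolding T_def by auto
  have "2 * real (graph_size n adj) = degree_sum adj (S \<union> T) (S \<union> T)"
    using degree_sum_vertex_set[OF g] \<open>S \<union> T = {0..<n}\<close> by simp
  also have "\<dots> = degree_sum adj S S + 2 * degree_sum adj S T + degree_sum adj T T"
    using \<open>finite S\<close> \<open>finite T\<close> \<open>S \<inter> T = {}\<close> degree_sum_commute[OF g T S]
    by (simp add: degree_sum_Un_left degree_sum_Un_right Int_commute)
  finally have handshake: "2 * real (graph_size n adj)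
      = degree_sum adj S S + 2 * degree_sum adj S T + degree_sum adj T T" .
  have "degree_sum adj S T \<le> (\<Sum>v\<in>S. real (card (nbhd adj S v)) + a)"
    unfolding degree_sum_def T_def using inside by (intro sum_mono) (metis of_nat_add of_nat_le_iff)
  then have ST: "degree_sum adj S T \<le> degree_sum adj S S + a * real (card S)"
    unfolding degree_sum_def by (simp add: sum.distrib mult.commute)
  have "(\<Sum>v\<in>T. real (card (nbhd adj T v)) + b) \<le> degree_sum adj T S"
    unfolding degree_sum_def T_def using outside by (intro sum_mono) (metis of_nat_add of_nat_le_iff)
  then have TT: "degree_sum adj T T + b * real (card T) \<le> degree_sum adj S T"
    unfolding degree_sum_commute[OF g T S] unfolding degree_sum_def by (simp add: sum.distrib mult.commute)
  have "real (card T) = real n - real (card S)"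
    using \<open>finite S\<close> \<open>finite T\<close> \<open>S \<inter> T = {}\<close> \<open>S \<union> T = {0..<n}\<close> card_Un_disjoint[of S T] by simp
  then have "real b * real (card T) = real b * real n - real b * real (card S)"
    by (simp add: right_diff_distrib)
  moreover have "(4 * graph_spectral_radius n adj + 3 * real a + real b) * real (card S)
      = 4 * (graph_spectral_radius n adj * real (card S)) + 3 * (real a * real (card S))
        + real b * real (card S)"
    by (simp add: algebra_simps)
  ultimately show ?thesis
    using handshake ST TT degree_sum_le_spectral_radius[OF g \<open>0 < n\<close> S] by linarith
qed

lemma graph_spectral_radius_nonneg:
  assumes "simple_graph n adj" and "0 < n"
  shows "0 \<le> graph_spectral_radius n adj"
proof -
  have "nbhd adj {0} 0 = {}" using assms unfolding simple_graph_def nbhd_def by auto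
  then show ?thesis
    using degree_sum_le_spectral_radius[OF assms, of "{0}"] assms(2) by (simp add: degree_sum_def)
qed

lemma ceiling_divide_le_nat:
  fixes x c :: real and k :: nat
  assumes "0 < c" and "x \<le> c * k"
  shows "\<lceil>x / c\<rceil> \<le> int k"
  using assms by (simp add: ceiling_le_iff divide_le_eq mult.commute)

lemma global_dual_alliance_card_ge:
  assumes g: "simple_graph n adj" and "0 < n" and "global_dual_alliance n adj S"
  shows "\<lceil>(2 * real (graph_size n adj) + real n) / (4 * (graph_spectral_radius n adj + 1))\<rceil>
    \<le> int (card S)"
proof (rule ceiling_divide_le_nat)
  show "0 < 4 * (graph_spectral_radius n adj + 1)"
    using graph_spectral_radius_nonneg[OF g \<open>0 < n\<close>] by simp
  from assms(3) have "S \<subseteq> {0..<n}"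
    and "\<And>v. v \<in> S \<Longrightarrow> card (nbhd adj ({0..<n} - S) v) \<le> card (nbhd adj S v) + 1"
    and "\<And>v. v \<in> {0..<n} - S \<Longrightarrow> card (nbhd adj ({0..<n} - S) v) + 1 \<le> card (nbhd adj S v)"
    unfolding global_dual_alliance_def by auto
  from alliance_size_bound[OF g \<open>0 < n\<close> this]
  show "2 * real (graph_size n adj) + real n \<le> 4 * (graph_spectral_radius n adj + 1) * card S"
    by (simp add: algebra_simps)
qed

lemma global_strong_dual_alliance_card_ge:
  assumes g: "simple_graph n adj" and "0 < n" and "global_strong_dual_alliance n adj S"
  shows "\<lceil>(real (graph_size n adj) + real n) / (2 * graph_spectral_radius n adj + 1)\<rceil>
    \<le> int (card S)"
proof (rule ceiling_divide_le_nat)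
  show "0 < 2 * graph_spectral_radius n adj + 1"
    using graph_spectral_radius_nonneg[OF g \<open>0 < n\<close>] by simp
  from assms(3) have "S \<subseteq> {0..<n}"
    and "\<And>v. v \<in> S \<Longrightarrow> card (nbhd adj ({0..<n} - S) v) \<le> card (nbhd adj S v) + 0"
    and "\<And>v. v \<in> {0..<n} - S \<Longrightarrow> card (nbhd adj ({0..<n} - S) v) + 2 \<le> card (nbhd adj S v)"
    unfolding global_strong_dual_alliance_def by auto
  from alliance_size_bound[OF g \<open>0 < n\<close> this]
  show "real (graph_size n adj) + real n \<le> (2 * graph_spectral_radius n adj + 1) * card S"
    by (simp add: algebra_simps)
qed

lemma Min_card_attained:
  assumes "P S" and "finite (Collect P)"
  obtains S' where "P S'" and "Min (card ` Collect P) = card S'"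
proof -
  have "Min (card ` Collect P) \<in> card ` Collect P" using assms by (intro Min_in) auto
  then show thesis using that by auto
qed

lemma finite_Collect_subsets: "finite A \<Longrightarrow> (\<And>S. P S \<Longrightarrow> S \<subseteq> A) \<Longrightarrow> finite (Collect P)"
  by (rule finite_subset[of _ "Pow A"]) auto

lemma gdual_alliance_number_attained:
  assumes "0 < n"
  obtains S where "global_dual_alliance n adj S" and "gdual_alliance_number n adj = card S"
proof -
  have "global_dual_alliance n adj {0..<n}"
    using assms unfolding global_dual_alliance_def nbhd_def by auto
  moreover have "finite {S. global_dual_alliance n adj S}"
    by (rule finite_Collect_subsets[of "{0..<n}"]) (simp_all add: global_dual_alliance_def)
  ultimately show thesis
    using that unfolding gdual_alliance_number_def by (rule Min_card_attained)
qed

lemma gstrong_dual_alliance_number_attained: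
  assumes "0 < n"
  obtains S where "global_strong_dual_alliance n adj S"
    and "gstrong_dual_alliance_number n adj = card S"
proof -
  have "global_strong_dual_alliance n adj {0..<n}"
    using assms unfolding global_strong_dual_alliance_def nbhd_def by auto
  moreover have "finite {S. global_strong_dual_alliance n adj S}"
    by (rule finite_Collect_subsets[of "{0..<n}"]) (simp_all add: global_strong_dual_alliance_def)
  ultimately show thesis
    using that unfolding gstrong_dual_alliance_number_def by (rule Min_card_attained)
qed

theorem theorem8:
  fixes n :: nat and adj :: "nat \<Rightarrow> nat \<Rightarrow> bool"
  assumes "simple_graph n adj" and "n \<ge> 1"
  defines "m \<equiv> graph_size n adj" and "lam \<equiv> graph_spectral_radius n adj"
  shows "int (gdual_alliance_number n adj) \<ge> \<lceil>(2 * real m + real n) / (4 * (lam + 1))\<rceil>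
     \<and> int (gstrong_dual_alliance_number n adj) \<ge> \<lceil>(real m + real n) / (2 * lam + 1)\<rceil>"
proof
  have "0 < n" using assms(2) by simp
  obtain S where "global_dual_alliance n adj S" and "gdual_alliance_number n adj = card S"
    using gdual_alliance_number_attained[OF \<open>0 < n\<close>] .
  then show "int (gdual_alliance_number n adj) \<ge> \<lceil>(2 * real m + real n) / (4 * (lam + 1))\<rceil>"
    unfolding m_def lam_def using global_dual_alliance_card_ge[OF assms(1) \<open>0 < n\<close>] by simp
  obtain S' where "global_strong_dual_alliance n adj S'"
    and "gstrong_dual_alliance_number n adj = card S'"
    using gstrong_dual_alliance_number_attained[OF \<open>0 < n\<close>] .
  then show "int (gstrong_dual_alliance_number n adj) \<ge> \<lceil>(real m + real n) / (2 * lam + 1)\<rceil>"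
    unfolding m_def lam_def using global_strong_dual_alliance_card_ge[OF assms(1) \<open>0 < n\<close>] by simp
qed

end
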